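(* Let $\mathbf{D}^*=[\mathbf{d}^*_1,\dots,\mathbf{d}^*_n]\in\mathbb{R}^{d\times n}$ be column-orthogonal and let $\mathbf{x}=\mathbf{D}^*\boldsymbol{\beta}$, where $\boldsymbol{\beta}\in\mathbb{R}^n$ has support $S^*$ with $|S^*|=k$ and non-zero entries satisfying $\gamma\le|\beta_i|\le\Gamma$ for $0<\gamma\le\Gamma$. Let $\rho>0$ with $2\rho<\frac{\gamma}{4\sqrt{k}\Gamma}$. Then for any $\mathbf{D}=[\mathbf{d}_1,\dots,\mathbf{d}_n]\in\mathbb{R}^{d\times n}$ with $\|\mathbf{D}-\mathbf{D}^*\|_{1,2}\le2\rho$, $$S=\arg\max_{T\subseteq[n],|T|\le k}\sum_{i\in T}|\langle\mathbf{d}_i,\mathbf{x}\rangle|=S^*.$$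
   Context: Column-orthogonal means $\mathbf{A}^\top\mathbf{A}=\mathbf{I}$; $\|\mathbf{A}\|_{1,2}$ is the maximum Euclidean norm of the columns of $\mathbf{A}$. *)

theory Defs
  imports "HOL-Analysis.Analysis"
begin

text \<open>A d x n real matrix is \<open>real^'n^'d\<close>; its i-th column is \<open>column i A\<close>.\<close>

definition col_orthogonal :: "real^'n^'d \<Rightarrow> bool" where
  "col_orthogonal A \<longleftrightarrow> transpose A ** A = mat 1"

definition norm12 :: "real^'n^'d \<Rightarrow> real" where
  "norm12 A = Max (range (\<lambda>i. norm (column i A)))"

definition supp_vec :: "real^'n \<Rightarrow> 'n set" where
  "supp_vec b = {i. b $ i \<noteq> 0}"

definition argmax_sets :: "real^'n^'d \<Rightarrow> real^'d \<Rightarrow> nat \<Rightarrow> 'n set set" where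
  "argmax_sets D x k =
     {T. card T \<le> k \<and>
         (\<forall>T'. card T' \<le> k \<longrightarrow>
            (\<Sum>i\<in>T'. \<bar>column i D \<bullet> x\<bar>) \<le> (\<Sum>i\<in>T. \<bar>column i D \<bullet> x\<bar>))}"

end

theory Submission
  imports Defs
begin

text \<open>Column-orthogonality gives \<open>\<langle>d\<^sup>*\<^sub>i, x\<rangle> = \<beta>\<^sub>i\<close> and \<open>\<parallel>x\<parallel> = \<parallel>\<beta>\<parallel> \<le> \<surd>k \<Gamma>\<close>, so by Cauchy-Schwarz every
  correlation \<open>\<langle>d\<^sub>i, x\<rangle>\<close> is within \<open>2\<rho>\<surd>k \<Gamma> < \<gamma>/4\<close> of \<open>\<beta>\<^sub>i\<close>. Hence \<open>|\<langle>d\<^sub>i, x\<rangle>|\<close> exceeds \<open>\<gamma>/4\<close> exactly on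
  the support \<open>S\<^sup>*\<close>, and a set of at most \<open>k\<close> indices other than \<open>S\<^sup>*\<close> trades some index of \<open>S\<^sup>*\<close>
  for at most as many indices outside it, strictly losing weight.\<close>

lemma column_diff: "column i (A - B) = column i A - column i (B::'a::ab_group_add^'n^'m)"
  by (simp add: column_def vec_eq_iff)

lemma norm_column_le_norm12: "norm (column i A) \<le> norm12 A"
  unfolding norm12_def by (rule Max_ge) auto

lemma inner_column_diff_le_norm12:
  "\<bar>column i D \<bullet> x - column i D' \<bullet> x\<bar> \<le> norm12 (D - D') * norm x"
proof -
  have "\<bar>column i D \<bullet> x - column i D' \<bullet> x\<bar> = \<bar>column i (D - D') \<bullet> x\<bar>"
    by (simp add: column_diff inner_diff_left)
  also have "\<dots> \<le> norm (column i (D - D')) * norm x"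
    by (rule Cauchy_Schwarz_ineq2)
  also have "\<dots> \<le> norm12 (D - D') * norm x"
    by (simp add: mult_right_mono norm_column_le_norm12)
  finally show ?thesis .
qed

lemma col_orthogonal_transpose_mult:
  assumes "col_orthogonal A"
  shows "transpose A *v (A *v b) = b"
  using assms by (simp add: col_orthogonal_def matrix_vector_mul_assoc)

lemma col_orthogonal_inner_column:
  assumes "col_orthogonal A"
  shows "column i A \<bullet> (A *v b) = b $ i"
proof -
  have "column i A \<bullet> (A *v b) = (transpose A *v (A *v b)) $ i"
    by (simp add: matrix_vector_mult_def column_def transpose_def inner_vec_def mult.commute)
  then show ?thesis
    using col_orthogonal_transpose_mult[OF assms] by simp
qed

lemma col_orthogonal_norm:
  assumes "col_orthogonal A"
  shows "norm (A *v b) = norm b"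
proof -
  have "(A *v b) \<bullet> (A *v b) = (b v* transpose A) \<bullet> (A *v b)"
    by simp
  also have "\<dots> = b \<bullet> b"
    by (simp only: dot_lmul_matrix col_orthogonal_transpose_mult[OF assms])
  finally show ?thesis
    by (simp add: norm_eq_sqrt_inner)
qed

lemma norm_le_sqrt_card_supp_vec:
  fixes b :: "real^'n::finite"
  assumes "0 \<le> \<Gamma>" and "\<forall>i\<in>supp_vec b. \<bar>b $ i\<bar> \<le> \<Gamma>"
  shows "norm b \<le> sqrt (card (supp_vec b)) * \<Gamma>"
proof -
  have "b \<bullet> b = (\<Sum>i\<in>supp_vec b. (b $ i)\<^sup>2)"
    unfolding inner_vec_def inner_real_def power2_eq_square
    by (rule sum.mono_neutral_right) (auto simp: supp_vec_def)
  also have "\<dots> \<le> (\<Sum>i\<in>supp_vec b. \<Gamma>\<^sup>2)"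
    by (intro sum_mono) (metis assms power2_abs abs_ge_zero power_mono)
  also have "\<dots> = (sqrt (card (supp_vec b)) * \<Gamma>)\<^sup>2"
    by (simp add: power_mult_distrib)
  finally show ?thesis
    using assms(1) by (simp add: norm_eq_sqrt_inner real_le_lsqrt)
qed

lemma sum_less_sum_threshold:
  fixes a :: "'a \<Rightarrow> real"
  assumes "finite S" "finite T" "card T \<le> card S" "T \<noteq> S" "0 \<le> c"
    and above: "\<And>i. i \<in> S \<Longrightarrow> c < a i" and below: "\<And>i. i \<notin> S \<Longrightarrow> a i \<le> c"
  shows "sum a T < sum a S"
proof -
  have "\<not> S \<subseteq> T"
    using assms(2-4) card_seteq by blast
  then have "S - T \<noteq> {}"
    by blast
  have card_le: "card (T - S) \<le> card (S - T)"
    using assms(1-3) by (simp add: card_Diff_subset_Int Int_commute card_mono)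
  have "sum a (T - S) \<le> card (T - S) * c"
    using sum_mono[of "T - S" a "\<lambda>_. c"] below by simp
  also have "\<dots> \<le> card (S - T) * c"
    using card_le \<open>0 \<le> c\<close> by (simp add: mult_right_mono)
  also have "\<dots> < sum a (S - T)"
    using sum_strict_mono[of "S - T" "\<lambda>_. c" a] above \<open>S - T \<noteq> {}\<close> assms(1) by simp
  finally have "sum a (T - S) < sum a (S - T)" .
  moreover have "sum a T = sum a (T - S) + sum a (S \<inter> T)"
    and "sum a S = sum a (S - T) + sum a (S \<inter> T)"
    using assms(1,2) by (metis sum.Int_Diff add.commute Int_commute)+
  ultimately show ?thesis
    by linarith
qed

lemma argmax_sets_eq_singleton:
  assumes "card S = k"
    and "\<And>T. card T \<le> k \<Longrightarrow> T \<noteq> S \<Longrightarrow>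
           (\<Sum>i\<in>T. \<bar>column i D \<bullet> x\<bar>) < (\<Sum>i\<in>S. \<bar>column i D \<bullet> x\<bar>)"
  shows "argmax_sets D x k = {S}"
  using assms unfolding argmax_sets_def by (fastforce simp: not_less[symmetric])

theorem lemmaC4:
  fixes Dstar D :: "real^'n::finite^'d::finite"
    and \<beta> :: "real^'n" and x :: "real^'d"
    and k :: nat and \<gamma> \<Gamma> \<rho> :: real
  assumes "col_orthogonal Dstar"
    and "x = Dstar *v \<beta>"
    and "card (supp_vec \<beta>) = k"
    and "0 < \<gamma>" and "\<gamma> \<le> \<Gamma>"
    and "\<forall>i\<in>supp_vec \<beta>. \<gamma> \<le> \<bar>\<beta> $ i\<bar> \<and> \<bar>\<beta> $ i\<bar> \<le> \<Gamma>"
    and "0 < \<rho>" and "2 * \<rho> < \<gamma> / (4 * sqrt (real k) * \<Gamma>)"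
    and "norm12 (D - Dstar) \<le> 2 * \<rho>"
  shows "argmax_sets D x k = {supp_vec \<beta>}"
proof -
  have "k > 0"
    using assms(7,8) by (cases k) auto
  then have bound: "2 * \<rho> * (sqrt k * \<Gamma>) < \<gamma> / 4"
    using assms(4,5,8) by (simp add: pos_less_divide_eq mult.assoc)
  have "norm x \<le> sqrt k * \<Gamma>"
    using assms(2-6) col_orthogonal_norm[OF assms(1)] norm_le_sqrt_card_supp_vec[of \<Gamma> \<beta>] by auto
  then have "norm12 (D - Dstar) * norm x \<le> 2 * \<rho> * (sqrt k * \<Gamma>)"
    using assms(7,9) by (intro mult_mono) auto
  then have close: "\<bar>column i D \<bullet> x - \<beta> $ i\<bar> < \<gamma> / 4" for i
    using inner_column_diff_le_norm12[of i D x Dstar] bound assms(1,2)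
    by (simp add: col_orthogonal_inner_column)
  have "(\<Sum>i\<in>T. \<bar>column i D \<bullet> x\<bar>) < (\<Sum>i\<in>supp_vec \<beta>. \<bar>column i D \<bullet> x\<bar>)"
    if "card T \<le> k" "T \<noteq> supp_vec \<beta>" for T
  proof (rule sum_less_sum_threshold[where c = "\<gamma> / 4"])
    show "\<gamma> / 4 < \<bar>column i D \<bullet> x\<bar>" if "i \<in> supp_vec \<beta>" for i
    proof -
      have "\<gamma> \<le> \<bar>\<beta> $ i\<bar>"
        using assms(6) that by blast
      then show ?thesis
        using close[of i] assms(4) by linarith
    qed
    show "\<bar>column i D \<bullet> x\<bar> \<le> \<gamma> / 4" if "i \<notin> supp_vec \<beta>" for i
      using close[of i] that by (simp add: supp_vec_def)
  qed (use that assms(3,4) in simp_all)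
  then show ?thesis
    by (rule argmax_sets_eq_singleton[OF assms(3)])
qed

end
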